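(* Let $d \geq 3$ be an integer. There is a function $\varepsilon_d(n)$ with $\varepsilon_d(n) \to 0$ as $n \to \infty$ such that for every positive integer $n$ there is a subset $A$ of the lattice cube $[n]^d=\{1,\dots,n\}^d$ with $|A| \geq n^{\frac{3}{d+1} - \varepsilon_d(n)}$ such that no $d+2$ points of $A$ lie on a common sphere and no $d+2$ points of $A$ lie on a common hyperplane.
   Context: $[n]=\{1,\dots,n\}$. A sphere means a $(d-1)$-dimensional sphere in $\mathbb{R}^d$; a hyperplane means an affine hyperplane in $\mathbb{R}^d$. The bound $n^{\frac{3}{d+1}-o(1)}$ is for fixed $d$ as $n\to\infty$. *)

theory Defs
  imports "HOL-Analysis.Analysis"
begin

definition lattice_cube :: "nat \<Rightarrow> (real ^ 'd) set" where
  "lattice_cube n = {x. \<forall>i. x $ i \<in> real ` {1..n}}"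

definition is_sphere :: "(real ^ 'd) set \<Rightarrow> bool" where
  "is_sphere S \<longleftrightarrow> (\<exists>c r. r > 0 \<and> S = sphere c r)"

definition is_hyperplane :: "(real ^ 'd) set \<Rightarrow> bool" where
  "is_hyperplane H \<longleftrightarrow> (\<exists>a b. a \<noteq> 0 \<and> H = {x. a \<bullet> x = b})"

definition no_k_on_common :: "nat \<Rightarrow> ((real ^ 'd) set \<Rightarrow> bool) \<Rightarrow> (real ^ 'd) set \<Rightarrow> bool" where
  "no_k_on_common k P A \<longleftrightarrow>
     (\<forall>S. S \<subseteq> A \<and> card S = k \<longrightarrow> \<not> (\<exists>T. P T \<and> S \<subseteq> T))"

end

theory Submission
  imports Defs "Jordan_Normal_Form.Determinant" "HOL-Computational_Algebra.Primes"
    "HOL-Computational_Algebra.Polynomial" "HOL-Number_Theory.Cong" "HOL-Real_Asymp.Real_Asymp"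
begin

text \<open>Take a prime \<open>p \<ge> 5\<close> with \<open>n powr (3 / (d + 1)) \<le> p \<le> n\<close>, which exists for large \<open>n\<close>
  by Chebyshev's argument with central binomial coefficients, and integers \<open>a, b\<close> with
  \<open>p dvd a\<^sup>2 + b\<^sup>2 + 1\<close>. We build integer polynomials \<open>X_0, ..., X_(d-1)\<close> of degree at most \<open>d\<close>
  and \<open>N\<close> of degree \<open>d + 1\<close> with \<open>\<Sum>k. X_k(t)\<^sup>2 \<equiv> N(t) (mod p)\<close> such that
  \<open>1, X_0, ..., X_(d-1), N\<close> are linearly independent modulo \<open>p\<close>. The set \<open>A\<close> consists of the
  \<open>p\<close> points of \<open>[p]^d\<close> with coordinates \<open>X_k(t) mod p\<close>, \<open>0 \<le> t < p\<close>. If \<open>d + 2\<close> of them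
  lay on a sphere or a hyperplane, its equation would yield an integer relation
  \<open>c_0 + \<Sum>k. c_(k+1) x_k + c_(d+1) |x|\<^sup>2 = 0\<close> whose coefficients are not all divisible by
  \<open>p\<close>. Modulo \<open>p\<close> it becomes a polynomial in \<open>t\<close> of degree at most \<open>d + 1\<close> with \<open>d + 2\<close>
  roots, hence zero, contradicting the independence.\<close>

section \<open>Primes in short intervals\<close>

lemma less_power_if_le:
  fixes p m k :: nat
  assumes "2 \<le> p" and "m \<le> k"
  shows "m < p ^ k"
proof -
  have "m < 2 ^ m" by (rule less_exp)
  also have "\<dots> \<le> 2 ^ k" using assms(2) by (simp add: power_increasing)
  also have "\<dots> \<le> p ^ k" using assms(1) by (rule power_mono) simp
  finally show ?thesis .
qed

lemma multiplicity_eq_card_prime_power_dvd: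
  fixes p n :: nat
  assumes "prime p" and "n > 0"
  shows "multiplicity p n = card {k\<in>{1..n}. p ^ k dvd n}"
proof -
  let ?v = "multiplicity p n"
  have p_ge_2: "p \<ge> 2"
    using assms(1) prime_ge_2_nat by blast
  have dvd_iff: "p ^ k dvd n \<longleftrightarrow> k \<le> ?v" for k
    using assms(2) p_ge_2 by (simp add: power_dvd_iff_le_multiplicity)
  have "?v < p ^ ?v"
    using p_ge_2 by (simp add: less_power_if_le)
  also have "\<dots> \<le> n"
    using assms(2) by (intro dvd_imp_le) (simp_all add: dvd_iff)
  finally have "{k\<in>{1..n}. p ^ k dvd n} = {1..?v}"
    by (auto simp: dvd_iff)
  then show ?thesis by simp
qed

lemma multiplicity_fact_nat:
  fixes p :: nat
  assumes "prime p"
  shows "multiplicity p (fact n) = (\<Sum>k\<in>{1..n}. n div p ^ k)"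
proof (induction n)
  case 0
  then show ?case by simp
next
  case (Suc n)
  have p_ge_2: "p \<ge> 2"
    using assms prime_ge_2_nat by blast
  have "n < p ^ Suc n"
    using less_power_if_le[OF p_ge_2, of n "Suc n"] by simp
  then have extend: "(\<Sum>k\<in>{1..n}. n div p ^ k) = (\<Sum>k\<in>{1..Suc n}. n div p ^ k)"
    by simp
  have Suc_div: "Suc n div p ^ k = n div p ^ k + (if p ^ k dvd Suc n then 1 else 0)" for k
    using p_ge_2 by (auto simp: div_Suc dvd_eq_mod_eq_0)
  have "multiplicity p (fact (Suc n) :: nat) = multiplicity p (Suc n * fact n)"
    by (simp add: fact_Suc)
  also have "\<dots> = multiplicity p (Suc n) + multiplicity p (fact n :: nat)"
    using assms by (intro prime_elem_multiplicity_mult_distrib) auto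
  also have "\<dots> = card {k\<in>{1..Suc n}. p ^ k dvd Suc n} + (\<Sum>k\<in>{1..Suc n}. n div p ^ k)"
    using Suc.IH extend multiplicity_eq_card_prime_power_dvd[OF assms] by simp
  also have "card {k\<in>{1..Suc n}. p ^ k dvd Suc n} = (\<Sum>k\<in>{1..Suc n}. if p ^ k dvd Suc n then 1 else 0)"
    unfolding card_eq_sum by (rule sum.inter_filter) simp
  also have "\<dots> + (\<Sum>k\<in>{1..Suc n}. n div p ^ k) = (\<Sum>k\<in>{1..Suc n}. Suc n div p ^ k)"
    unfolding Suc_div sum.distrib by (simp only: add.commute)
  finally show ?case .
qed

lemma two_mult_div_le:
  fixes m q :: nat
  assumes "q > 0"
  shows "2 * m div q \<le> 2 * (m div q) + 1"
proof -
  have "m mod q < q"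
    using assms by simp
  moreover have "(2 * (m div q) + 2) * q = 2 * (q * (m div q)) + 2 * q"
    by (simp add: algebra_simps)
  ultimately have "2 * m < (2 * (m div q) + 2) * q"
    using mult_div_mod_eq[of q m] by linarith
  then have "2 * m div q < 2 * (m div q) + 2"
    by (rule less_mult_imp_div_less)
  then show ?thesis by simp
qed

text \<open>By Legendre's formula the multiplicity of \<open>p\<close> in \<open>(2m choose m)\<close> is a sum of
  terms \<open>\<lfloor>2m / p^k\<rfloor> - 2 \<lfloor>m / p^k\<rfloor> \<in> {0, 1}\<close>, which vanish once \<open>p^k > 2m\<close>.\<close>

lemma prime_power_multiplicity_central_binomial_le:
  fixes p m :: nat
  assumes "prime p" and "m \<ge> 1"
  shows "p ^ multiplicity p ((2 * m) choose m) \<le> 2 * m"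
proof (rule ccontr)
  let ?v = "multiplicity p ((2 * m) choose m)"
  assume too_large: "\<not> ?thesis"
  have p_ge_2: "p \<ge> 2"
    using assms(1) prime_ge_2_nat by blast
  have vanish: "2 * m div p ^ k = 0" if "k \<ge> ?v" for k
  proof -
    have "p ^ ?v \<le> p ^ k"
      using that p_ge_2 by (simp add: power_increasing)
    then show ?thesis
      using too_large by simp
  qed
  have "fact m * fact (2 * m - m) * ((2 * m) choose m) = (fact (2 * m) :: nat)"
    by (rule binomial_fact_lemma) simp
  then have "fact (2 * m) = ((2 * m) choose m) * (fact m * fact m :: nat)"
    by (simp add: ac_simps)
  then have "multiplicity p (fact (2 * m) :: nat) = ?v + 2 * multiplicity p (fact m :: nat)"
    using assms(1) by (simp add: prime_elem_multiplicity_mult_distrib)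
  moreover have "(\<Sum>k\<in>{1..m}. m div p ^ k) = (\<Sum>k\<in>{1..2*m}. m div p ^ k)"
    using p_ge_2 by (intro sum.mono_neutral_left) (auto simp: less_power_if_le)
  ultimately have legendre: "(\<Sum>k\<in>{1..2*m}. 2 * m div p ^ k) = ?v + 2 * (\<Sum>k\<in>{1..2*m}. m div p ^ k)"
    using multiplicity_fact_nat[OF assms(1)] by simp
  have "2 * m div p ^ k \<le> 2 * (m div p ^ k) + (if k < ?v then 1 else 0)" for k
    using two_mult_div_le[of "p ^ k" m] vanish[of k] p_ge_2 by (cases "k < ?v") auto
  then have "(\<Sum>k\<in>{1..2*m}. 2 * m div p ^ k)
      \<le> (\<Sum>k\<in>{1..2*m}. 2 * (m div p ^ k) + (if k < ?v then 1 else 0))"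
    by (rule sum_mono)
  also have "\<dots> = 2 * (\<Sum>k\<in>{1..2*m}. m div p ^ k) + card {k\<in>{1..2*m}. k < ?v}"
    unfolding sum.distrib sum_distrib_left card_eq_sum sum.inter_filter[OF finite_atLeastAtMost] ..
  also have "card {k\<in>{1..2*m}. k < ?v} \<le> card {1..<?v}"
    by (intro card_mono) auto
  finally have "?v \<le> card {1..<?v}"
    using legendre by linarith
  moreover have "?v \<ge> 1"
    using vanish[of 0] assms(2) by (cases "?v") auto
  ultimately show False by simp
qed

lemma central_binomial_le_power_card_prime_factors:
  assumes "m \<ge> 1"
  shows "(2 * m) choose m \<le> (2 * m) ^ card (prime_factors ((2 * m) choose m))"
proof -
  let ?B = "(2 * m) choose m"
  have "?B = (\<Prod>q\<in>prime_factors ?B. q ^ multiplicity q ?B)"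
    by (rule prime_factorization_nat) simp
  also have "\<dots> \<le> (\<Prod>q\<in>prime_factors ?B. 2 * m)"
    using prime_power_multiplicity_central_binomial_le assms by (intro prod_mono) auto
  finally show ?thesis by simp
qed

lemma card_prime_factors_central_binomial_le:
  fixes x :: real and m :: nat
  assumes "0 \<le> x" and "\<And>q::nat. prime q \<Longrightarrow> q \<le> 2 * m \<Longrightarrow> q < x"
  shows "card (prime_factors ((2 * m) choose m)) \<le> x + 1"
proof -
  let ?B = "(2 * m) choose m"
  have "?B dvd fact (2 * m)"
  proof -
    have "fact m * fact (2 * m - m) * ?B = fact (2 * m)"
      by (rule binomial_fact_lemma) simp
    moreover have "?B dvd fact m * fact (2 * m - m) * ?B"
      by (rule dvd_triv_right)
    ultimately show ?thesis
      by simp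
  qed
  have "prime_factors ?B \<subseteq> {..<nat \<lceil>x\<rceil>}"
  proof
    fix q assume q: "q \<in> prime_factors ?B"
    then have "prime q"
      by (rule in_prime_factors_imp_prime)
    have "q dvd fact (2 * m)"
      using in_prime_factors_imp_dvd[OF q] \<open>?B dvd fact (2 * m)\<close> by (rule dvd_trans)
    then have "real q < x"
      using assms(2) prime_dvd_fact_iff[OF \<open>prime q\<close>] \<open>prime q\<close> by simp
    then show "q \<in> {..<nat \<lceil>x\<rceil>}"
      by (simp add: zless_nat_eq_int_zless less_ceiling_iff)
  qed
  then have "card (prime_factors ?B) \<le> nat \<lceil>x\<rceil>"
    using card_mono[OF finite_lessThan] by fastforce
  moreover have "real (nat \<lceil>x\<rceil>) \<le> x + 1"
    using assms(1) by linarith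
  ultimately show ?thesis
    by (meson of_nat_le_iff order_trans)
qed

lemma ln_central_binomial_bound:
  assumes "m \<ge> 1"
  shows "m * ln 4 - ln (2 * real m) \<le> card (prime_factors ((2 * m) choose m)) * ln (2 * real m)"
proof -
  let ?B = "(2 * m) choose m"
  have "ln (4 ^ m / (2 * real m)) \<le> ln (real ?B)"
    using central_binomial_lower_bound[of m] assms by (intro ln_mono) auto
  also have "\<dots> \<le> ln (real (2 * m) ^ card (prime_factors ?B))"
  proof (rule ln_mono)
    show "real ?B \<le> real (2 * m) ^ card (prime_factors ?B)"
      using central_binomial_le_power_card_prime_factors[OF assms] by (metis of_nat_le_iff of_nat_power)
  qed simp_all
  also have "\<dots> = card (prime_factors ?B) * ln (real (2 * m))"
    by (rule ln_realpow)
  finally show ?thesis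
    using assms by (simp add: ln_div ln_realpow)
qed

text \<open>Chebyshev's argument: without primes in \<open>[x, N]\<close> the central binomial coefficient
  \<open>(2m choose m) \<ge> 4^m / (2m)\<close>, \<open>m = N div 2\<close>, would be at most \<open>N^(x + 1)\<close>.\<close>

lemma exists_prime_between:
  fixes x :: real and N :: nat
  assumes "N \<ge> 4" and "(x + 2) * ln N < (real N - 1) * ln 2"
  shows "\<exists>p. prime p \<and> x \<le> p \<and> p \<le> N"
proof (rule ccontr)
  assume no_prime: "\<not> ?thesis"
  define m where "m = N div 2"
  have m: "m \<ge> 1" "2 * m \<le> N" "real N - 1 \<le> 2 * real m"
    unfolding m_def using assms(1) by linarith+
  have "x \<ge> 0"
  proof (rule ccontr)
    assume "\<not> x \<ge> 0"
    then have "prime (2::nat) \<and> x \<le> real 2 \<and> 2 \<le> N"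
      using assms(1) by simp
    then show False
      using no_prime by blast
  qed
  moreover have "real q < x" if "prime q" "q \<le> 2 * m" for q
  proof -
    have "q \<le> N"
      using that(2) m(2) by linarith
    then have "\<not> x \<le> real q"
      using no_prime that(1) by blast
    then show ?thesis
      by linarith
  qed
  ultimately have "card (prime_factors ((2 * m) choose m)) \<le> x + 1"
    by (rule card_prime_factors_central_binomial_le)
  moreover have ln_le: "ln (2 * real m) \<le> ln N"
    using m by (intro ln_mono) auto
  ultimately have "card (prime_factors ((2 * m) choose m)) * ln (2 * real m) \<le> (x + 1) * ln N"
    using m(1) \<open>x \<ge> 0\<close> by (intro mult_mono) auto
  then have "m * ln 4 - ln (2 * real m) \<le> (x + 1) * ln N"
    using ln_central_binomial_bound[OF m(1)] by linarith
  moreover have "ln (4 :: real) = 2 * ln 2"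
    using ln_realpow[of 2 2] by simp
  moreover have "(real N - 1) * ln 2 \<le> 2 * real m * ln 2"
    using m(3) by (intro mult_right_mono) auto
  ultimately have "(real N - 1) * ln 2 \<le> (x + 2) * ln N"
    using ln_le by (simp add: algebra_simps)
  then show False
    using assms(2) by linarith
qed

lemma eventually_exists_prime_between_powr:
  fixes c :: real
  assumes "0 < c" and "c < 1"
  shows "\<forall>\<^sub>F N in sequentially. \<exists>p. prime p \<and> real N powr c \<le> p \<and> p \<le> N"
proof -
  have "\<forall>\<^sub>F N in sequentially. (real N powr c + 2) * ln N < (real N - 1) * ln 2"
    using assms by real_asymp
  then show ?thesis
    using eventually_ge_at_top[of 4] by eventually_elim (rule exists_prime_between)
qed

section \<open>Integer linear algebra and polynomials modulo a prime\<close>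

lemma int_matrix_real_kernel_imp_int_kernel:
  fixes L :: "nat \<Rightarrow> nat \<Rightarrow> int" and w :: "nat \<Rightarrow> real"
  assumes "\<forall>i<m. (\<Sum>j<m. real_of_int (L i j) * w j) = 0" and "\<exists>j<m. w j \<noteq> 0"
  shows "\<exists>c. (\<exists>j<m. c j \<noteq> 0) \<and> (\<forall>i<m. (\<Sum>j<m. L i j * c j) = 0)"
proof -
  define M :: "int mat" where "M = mat m m (\<lambda>(i, j). L i j)"
  have M: "M \<in> carrier_mat m m"
    unfolding M_def by simp
  have MR: "of_int_hom.mat_hom M \<in> carrier_mat m m"
    using M by simp
  have "of_int_hom.mat_hom M *\<^sub>v vec m w = 0\<^sub>v m"
    using assms(1) M by (intro eq_vecI) (auto simp: M_def scalar_prod_def atLeast0LessThan)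
  moreover have "vec m w \<noteq> 0\<^sub>v m"
    using assms(2) by (metis index_vec index_zero_vec(1))
  ultimately have "Determinant.det (of_int_hom.mat_hom M :: real mat) = 0"
    using det_0_iff_vec_prod_zero[OF MR] by (meson vec_carrier)
  then have "Determinant.det M = 0"
    by simp
  then obtain u where u: "u \<in> carrier_vec m" "u \<noteq> 0\<^sub>v m" "M *\<^sub>v u = 0\<^sub>v m"
    using det_0_iff_vec_prod_zero[OF M] by blast
  have "\<exists>j<m. vec_index u j \<noteq> 0"
    using u(1,2) by (metis eq_vecI carrier_vecD index_zero_vec)
  moreover have "(\<Sum>j<m. L i j * vec_index u j) = 0" if "i < m" for i
    using arg_cong[OF u(3), of "\<lambda>v. vec_index v i"] that u(1)
    by (simp add: M_def scalar_prod_def atLeast0LessThan)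
  ultimately show ?thesis by blast
qed

lemma int_kernel_imp_kernel_not_all_dvd:
  fixes L :: "nat \<Rightarrow> nat \<Rightarrow> int" and c :: "nat \<Rightarrow> int" and p :: int
  assumes "\<exists>j<m. c j \<noteq> 0" and "\<forall>i<m. (\<Sum>j<m. L i j * c j) = 0" and "\<not> is_unit p"
  shows "\<exists>c'. (\<exists>j<m. \<not> p dvd c' j) \<and> (\<forall>i<m. (\<Sum>j<m. L i j * c' j) = 0)"
proof -
  define g where "g = Gcd (c ` {..<m})"
  have "g \<noteq> 0"
    using assms(1) unfolding g_def by auto
  define c' where "c' j = c j div g" for j
  have c_eq: "c j = g * c' j" if "j < m" for j
    using that unfolding c'_def g_def by (simp add: Gcd_dvd)
  have "\<exists>j<m. \<not> p dvd c' j"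
  proof (rule ccontr)
    assume "\<not> ?thesis"
    then have "p * g dvd c j" if "j < m" for j
      using that c_eq by (simp add: mult.commute)
    then have "p * g dvd Gcd (c ` {..<m})"
      by (intro Gcd_greatest) auto
    then have "p * g dvd 1 * g"
      unfolding g_def by simp
    then show False
      using \<open>g \<noteq> 0\<close> assms(3) by (subst (asm) dvd_mult_cancel_right) auto
  qed
  moreover have "(\<Sum>j<m. L i j * c' j) = 0" if "i < m" for i
  proof -
    have "g * (\<Sum>j<m. L i j * c' j) = (\<Sum>j<m. L i j * c j)"
      by (simp add: sum_distrib_left c_eq algebra_simps)
    then show ?thesis
      using assms(2) that \<open>g \<noteq> 0\<close> by simp
  qed
  ultimately show ?thesis by blast
qed

lemma sum_lessThan_add_2:
  fixes n :: nat
  shows "(\<Sum>j<n + 2. f j) = f 0 + (\<Sum>k<n. f (k + 1)) + f (n + 1)"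
proof -
  have "(\<Sum>j<n + 2. f j) = f 0 + (\<Sum>k<n + 1. f (Suc k))"
    using sum.lessThan_Suc_shift[of f "n + 1"] by simp
  then show ?thesis
    by (simp add: add.assoc)
qed

lemma exists_integer_quadric_relation_not_all_dvd:
  fixes y :: "nat \<Rightarrow> 'a \<Rightarrow> int" and w :: "nat \<Rightarrow> real" and p :: int
  assumes "finite T" and "card T = n + 2" and "\<not> is_unit p" and "\<exists>j<n + 2. w j \<noteq> 0"
    and "\<forall>t\<in>T. w 0 + (\<Sum>k<n. w (k + 1) * y k t) + w (n + 1) * (\<Sum>k<n. (y k t)\<^sup>2) = 0"
  shows "\<exists>c. (\<exists>j<n + 2. \<not> p dvd c j) \<and>
    (\<forall>t\<in>T. c 0 + (\<Sum>k<n. c (k + 1) * y k t) + c (n + 1) * (\<Sum>k<n. (y k t)\<^sup>2) = 0)"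
proof -
  obtain \<sigma> where \<sigma>: "bij_betw \<sigma> {..<n + 2} T"
    using ex_bij_betw_nat_finite[OF assms(1)] assms(2) by (metis atLeast0LessThan)
  define row where "row t j = (if j = 0 then 1 else if j \<le> n then y (j - 1) t else \<Sum>k<n. (y k t)\<^sup>2)"
    for t j
  have row_sum: "(\<Sum>j<n + 2. of_int (row t j) * v j)
      = v 0 + (\<Sum>k<n. v (k + 1) * of_int (y k t)) + v (n + 1) * of_int (\<Sum>k<n. (y k t)\<^sup>2)"
    for t and v :: "nat \<Rightarrow> 'b::comm_ring_1"
    unfolding sum_lessThan_add_2 by (simp add: row_def mult.commute)
  have "\<forall>i<n + 2. (\<Sum>j<n + 2. real_of_int (row (\<sigma> i) j) * w j) = 0"
    unfolding row_sum using assms(5) bij_betwE[OF \<sigma>] by auto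
  from int_matrix_real_kernel_imp_int_kernel[OF this assms(4)]
  obtain c0 where c0: "\<exists>j<n + 2. c0 j \<noteq> 0" "\<forall>i<n + 2. (\<Sum>j<n + 2. row (\<sigma> i) j * c0 j) = 0"
    by blast
  from int_kernel_imp_kernel_not_all_dvd[OF c0 assms(3)]
  obtain c where c: "(\<exists>j<n + 2. \<not> p dvd c j) \<and> (\<forall>i<n + 2. (\<Sum>j<n + 2. row (\<sigma> i) j * c j) = 0)" ..
  have "c 0 + (\<Sum>k<n. c (k + 1) * y k t) + c (n + 1) * (\<Sum>k<n. (y k t)\<^sup>2) = 0" if "t \<in> T" for t
  proof -
    have "t \<in> \<sigma> ` {..<n + 2}"
      using bij_betw_imp_surj_on[OF \<sigma>] that by simp
    then obtain i where "t = \<sigma> i" "i \<in> {..<n + 2}"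
      by (rule imageE)
    then show ?thesis
      using c row_sum[of t c] by (simp add: mult.commute)
  qed
  then show ?thesis
    using c by blast
qed

lemma eq_if_dvd_diff:
  fixes p s t :: int
  assumes "s \<in> {0..<p}" and "t \<in> {0..<p}" and "p dvd s - t"
  shows "s = t"
proof (rule ccontr)
  assume "s \<noteq> t"
  then have "\<bar>p\<bar> \<le> \<bar>s - t\<bar>"
    using assms(3) dvd_imp_le_int by simp
  then show False
    using assms(1,2) by auto
qed

lemma dvd_coeff_mult_if_dvd_coeffs:
  fixes F H :: "'a::comm_semiring_1 poly"
  assumes "\<forall>j. p dvd coeff H j"
  shows "p dvd coeff (F * H) j"
  using assms by (simp add: coeff_mult dvd_sum)

lemma prime_dvd_poly_synthetic_div:
  fixes G :: "int poly" and p s t :: int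
  assumes "prime p" and "s \<in> {0..<p}" "t \<in> {0..<p}" "s \<noteq> t"
    and "p dvd poly G s" "p dvd poly G t"
  shows "p dvd poly (synthetic_div G s) t"
proof -
  have "poly G t = (t - s) * poly (synthetic_div G s) t + poly G s"
    by (subst synthetic_div_correct'[of s G, symmetric]) (simp add: algebra_simps)
  then have "p dvd (t - s) * poly (synthetic_div G s) t"
    using assms(5,6) by (simp add: dvd_add_left_iff)
  moreover have "\<not> p dvd t - s"
    using eq_if_dvd_diff[of t p s] assms(2-4) by auto
  ultimately show ?thesis
    using assms(1) prime_dvd_mult_iff by blast
qed

lemma prime_dvd_coeffs_if_many_roots:
  fixes G :: "int poly" and p :: int
  assumes "prime p" and "T \<subseteq> {0..<p}" and "degree G < card T" and "\<forall>t\<in>T. p dvd poly G t"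
  shows "p dvd coeff G j"
proof -
  have "finite T"
    using assms(2) finite_subset by blast
  then show ?thesis
    using assms(2-4)
  proof (induction T arbitrary: G j rule: finite_induct)
    case empty
    then show ?case by simp
  next
    case (insert s T)
    let ?H = "synthetic_div G s"
    have "p dvd poly G s"
      using insert.prems(3) by simp
    have "p dvd coeff ?H i" for i
    proof (cases "degree G = 0")
      case True
      then show ?thesis
        by (simp add: synthetic_div_eq_0_iff[THEN iffD2])
    next
      case False
      then have "degree ?H < card T"
        using insert.hyps insert.prems(2) by (simp add: degree_synthetic_div)
      moreover have "p dvd poly ?H t" if "t \<in> T" for t
        using insert that \<open>p dvd poly G s\<close>
        by (intro prime_dvd_poly_synthetic_div[OF assms(1)]) auto
      ultimately show ?thesis
        using insert.prems(1) by (intro insert.IH) auto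
    qed
    then have "p dvd coeff ([:-s, 1:] * ?H + [:poly G s:]) j"
      using \<open>p dvd poly G s\<close> dvd_coeff_mult_if_dvd_coeffs[of p ?H "[:-s, 1:]" j]
      by (cases j) auto
    then show ?case
      by (simp only: synthetic_div_correct')
  qed
qed

lemma square_mod_prime_inj:
  fixes p a a' :: int
  assumes "prime p" and "a \<in> {0..<p}" "a' \<in> {0..<p}" and "2 * a < p" "2 * a' < p"
    and "a\<^sup>2 mod p = a'\<^sup>2 mod p"
  shows "a = a'"
proof -
  have "p dvd (a - a') * (a + a')"
    using assms(6) by (simp add: mod_eq_dvd_iff power2_eq_square algebra_simps)
  then have "p dvd a - a' \<or> p dvd (a + a') - 0"
    using assms(1) prime_dvd_mult_iff by auto
  then show ?thesis
    using assms(2-5) eq_if_dvd_diff[of "a + a'" p 0] eq_if_dvd_diff[of a p a'] by auto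
qed

lemma images_intersect_if_card_less:
  assumes "finite H" and "inj_on f H" and "inj_on g H" and "finite B" and "f ` H \<union> g ` H \<subseteq> B"
    and "card B < 2 * card H"
  shows "f ` H \<inter> g ` H \<noteq> {}"
proof
  assume "f ` H \<inter> g ` H = {}"
  then have "card (f ` H \<union> g ` H) = 2 * card H"
    using assms(1-3) by (simp add: card_Un_disjoint card_image)
  moreover have "card (f ` H \<union> g ` H) \<le> card B"
    using assms(4,5) by (rule card_mono)
  ultimately show False
    using assms(6) by simp
qed

lemma prime_dvd_sum_two_squares_plus_one:
  fixes p :: int
  assumes "prime p"
  shows "\<exists>a b. p dvd a\<^sup>2 + b\<^sup>2 + 1"
proof (cases "p = 2")
  case True
  then show ?thesis by (intro exI[of _ 1] exI[of _ 0]) simp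
next
  case False
  then have "p > 2"
    using prime_ge_2_int[OF assms] by simp
  then have "odd p"
    using assms prime_odd_int by blast
  then obtain k where k: "p = 2 * k + 1"
    by (blast elim: oddE)
  define H where "H = {0..k}"
  have sq_inj: "a = a'" if "a \<in> H" "a' \<in> H" "a\<^sup>2 mod p = a'\<^sup>2 mod p" for a a'
    using square_mod_prime_inj[OF assms _ _ _ _ that(3)] that(1,2) k unfolding H_def by auto
  text \<open>Pigeonhole: \<open>p = 2k + 1\<close> residues cannot hold \<open>k + 1\<close> distinct values \<open>a\<^sup>2\<close>
    and \<open>k + 1\<close> distinct values \<open>- 1 - b\<^sup>2\<close>.\<close>
  have inj_squares: "inj_on (\<lambda>a. a\<^sup>2 mod p) H"
    using sq_inj by (intro inj_onI) blast
  have inj_neg_squares: "inj_on (\<lambda>b. (- 1 - b\<^sup>2) mod p) H"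
  proof (rule inj_onI)
    fix b b' assume "b \<in> H" "b' \<in> H" "(- 1 - b\<^sup>2) mod p = (- 1 - b'\<^sup>2) mod p"
    then show "b = b'"
      using sq_inj by (simp add: mod_eq_dvd_iff dvd_diff_commute)
  qed
  have residues: "(\<lambda>a. a\<^sup>2 mod p) ` H \<union> (\<lambda>b. (- 1 - b\<^sup>2) mod p) ` H \<subseteq> {0..<p}"
    using \<open>p > 2\<close> by auto
  have "card {0..<p} < 2 * card H"
    using k \<open>p > 2\<close> unfolding H_def by simp
  then have "(\<lambda>a. a\<^sup>2 mod p) ` H \<inter> (\<lambda>b. (- 1 - b\<^sup>2) mod p) ` H \<noteq> {}"
    using images_intersect_if_card_less[OF _ inj_squares inj_neg_squares _ residues] unfolding H_def
    by simp
  then obtain z where "z \<in> (\<lambda>a. a\<^sup>2 mod p) ` H" "z \<in> (\<lambda>b. (- 1 - b\<^sup>2) mod p) ` H"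
    by blast
  then obtain a b where "a\<^sup>2 mod p = (- 1 - b\<^sup>2) mod p"
    by (elim imageE) (rule that, simp)
  then show ?thesis
    by (auto simp: mod_eq_dvd_iff algebra_simps)
qed

section \<open>Spheres and hyperplanes\<close>

lemma sphere_or_hyperplane_imp_quadric:
  fixes T :: "(real ^ 'd) set"
  assumes "is_sphere T \<or> is_hyperplane T"
  shows "\<exists>\<alpha> \<beta> \<gamma>. (\<beta> \<noteq> 0 \<or> \<gamma> \<noteq> 0) \<and> (\<forall>z\<in>T. \<alpha> + inner \<beta> z + \<gamma> * inner z z = 0)"
  using assms
proof
  assume "is_sphere T"
  then obtain c r where T: "T = sphere c r"
    unfolding is_sphere_def by blast
  have "(inner c c - r\<^sup>2) + inner (- 2 *\<^sub>R c) z + 1 * inner z z = 0" if "z \<in> T" for z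
  proof -
    have "inner (c - z) (c - z) = r\<^sup>2"
      using that unfolding T by (simp add: dist_norm power2_norm_eq_inner[symmetric])
    then show ?thesis
      by (simp add: inner_diff algebra_simps inner_commute)
  qed
  then show ?thesis
    by (intro exI[of _ "inner c c - r\<^sup>2"] exI[of _ "- 2 *\<^sub>R c"] exI[of _ 1]) auto
next
  assume "is_hyperplane T"
  then obtain n d where "n \<noteq> 0" and "T = {x. inner n x = d}"
    unfolding is_hyperplane_def by blast
  then show ?thesis
    by (intro exI[of _ "- d"] exI[of _ n] exI[of _ 0]) auto
qed

lemma sphere_or_hyperplane_coordinate_relation:
  fixes \<iota> :: "nat \<Rightarrow> 'd::finite" and T :: "(real ^ 'd) set"
  assumes \<iota>: "bij_betw \<iota> {..<n} UNIV" and "is_sphere T \<or> is_hyperplane T"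
  shows "\<exists>w. (\<exists>j<n + 2. w j \<noteq> 0) \<and>
    (\<forall>z\<in>T. w 0 + (\<Sum>k<n. w (k + 1) * z $ \<iota> k) + w (n + 1) * (\<Sum>k<n. (z $ \<iota> k)\<^sup>2) = 0)"
proof -
  obtain \<alpha> \<beta> \<gamma> where nontrivial: "\<beta> \<noteq> 0 \<or> \<gamma> \<noteq> 0"
    and on_T: "\<forall>z\<in>T. \<alpha> + inner \<beta> z + \<gamma> * inner z z = 0"
    using sphere_or_hyperplane_imp_quadric[OF assms(2)] by (elim exE conjE)
  define w where "w j = (if j = 0 then \<alpha> else if j \<le> n then \<beta> $ \<iota> (j - 1) else \<gamma>)" for j
  have "\<exists>j<n + 2. w j \<noteq> 0"
  proof (cases "\<beta> = 0")
    case True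
    then show ?thesis
      using nontrivial by (intro exI[of _ "n + 1"]) (simp add: w_def)
  next
    case False
    then have "\<exists>i. \<beta> $ i \<noteq> 0"
      by (simp add: Finite_Cartesian_Product.vec_eq_iff)
    then obtain i where "\<beta> $ i \<noteq> 0" ..
    have "i \<in> \<iota> ` {..<n}"
      using bij_betw_imp_surj_on[OF \<iota>] by simp
    then obtain k where "i = \<iota> k" "k \<in> {..<n}"
      by (rule imageE)
    then show ?thesis
      using \<open>\<beta> $ i \<noteq> 0\<close> by (intro exI[of _ "k + 1"]) (simp add: w_def)
  qed
  moreover have "(\<Sum>i\<in>UNIV. f i) = (\<Sum>k<n. f (\<iota> k))" for f :: "'d \<Rightarrow> real"
    using sum.reindex_bij_betw[OF \<iota>, of f] by simp
  then have "w 0 + (\<Sum>k<n. w (k + 1) * z $ \<iota> k) + w (n + 1) * (\<Sum>k<n. (z $ \<iota> k)\<^sup>2) = 0"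
    if "z \<in> T" for z
    using on_T that unfolding inner_vec_def by (simp add: w_def power2_eq_square)
  ultimately show ?thesis
    by blast
qed

section \<open>A curve on a quadric modulo a prime\<close>

lemma coeff_sum_monom_pred:
  fixes d :: "nat \<Rightarrow> 'a::comm_monoid_add"
  assumes "m \<ge> 1"
  shows "coeff (\<Sum>k\<in>{m..<n}. monom (d k) (k - 1)) j = (if m \<le> j + 1 \<and> j + 1 < n then d (j + 1) else 0)"
proof -
  have "coeff (\<Sum>k\<in>{m..<n}. monom (d k) (k - 1)) j = (\<Sum>k\<in>{m..<n}. if k = j + 1 then d k else 0)"
    unfolding coeff_sum using assms by (intro sum.cong) auto
  also have "\<dots> = (if m \<le> j + 1 \<and> j + 1 < n then d (j + 1) else 0)"
    by simp
  finally show ?thesis .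
qed

lemma poly_cutoff_plus_shift:
  fixes q :: "'a::comm_semiring_1 poly"
  shows "poly_cutoff n q + monom 1 n * poly_shift n q = q"
  by (rule poly_eqI) (auto simp: coeff_poly_cutoff coeff_monom_mult coeff_poly_shift)

text \<open>With \<open>u = t^D\<close> and \<open>w = t^(D-1)\<close>, the first three coordinates of the curve are
  \<open>u e + V e' + 2w g\<close> for \<open>e = (1, a, b)\<close>, \<open>e' = (1, -a, -b)\<close>, \<open>g = (0, b, -a)\<close>. Modulo \<open>p\<close>
  the vectors \<open>e, e'\<close> are isotropic, \<open>e \<bullet> e' = 2\<close>, \<open>g \<bullet> g = -1\<close> and \<open>g\<close> is orthogonal to both, so
  they contribute \<open>4uV - 4w\<^sup>2\<close> to the sum of squares; the other coordinates \<open>2t^(k-1)\<close> contribute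
  \<open>4(Q + w\<^sup>2)\<close>. The correction \<open>W\<close> in \<open>V = 2t - W\<close> cancels the part of \<open>4Q\<close> above degree
  \<open>D + 1\<close>, which leaves \<open>N\<close>.\<close>

locale sphere_curve =
  fixes D :: nat and a b :: int
  assumes three_le_D: "3 \<le> D"
begin

definition Q :: "int poly" where
  "Q = (\<Sum>k\<in>{3..<D}. monom 1 (2 * (k - 1))) - monom 1 (2 * (D - 1))"

definition W :: "int poly" where
  "W = monom 1 2 * poly_shift (D + 2) Q"

definition V :: "int poly" where
  "V = [:0, 2:] - W"

definition X :: "nat \<Rightarrow> int poly" where
  "X k = (if k = 0 then monom 1 D + V
     else if k = 1 then Polynomial.smult a (monom 1 D - V) + monom (2 * b) (D - 1)
     else if k = 2 then Polynomial.smult b (monom 1 D - V) - monom (2 * a) (D - 1)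
     else monom 2 (k - 1))"

definition N :: "int poly" where
  "N = monom 8 (D + 1) + Polynomial.smult 4 (poly_cutoff (D + 2) Q)"

lemma coeff_Q: "coeff Q i = (\<Sum>k\<in>{3..<D}. if i = 2 * (k - 1) then 1 else 0) - (if i = 2 * (D - 1) then 1 else 0)"
  unfolding Q_def by (simp add: coeff_sum eq_commute)

lemma coeff_Q_eq_0:
  assumes "2 * (D - 1) < i"
  shows "coeff Q i = 0"
proof -
  have "(\<Sum>k\<in>{3..<D}. if i = 2 * (k - 1) then 1 else 0) = (0::int)"
    using assms by (intro sum.neutral) auto
  then show ?thesis
    using assms unfolding coeff_Q by simp
qed

lemma abs_coeff_Q_le_1: "\<bar>coeff Q i\<bar> \<le> 1"
proof -
  have "(\<Sum>k\<in>{3..<D}. if i = 2 * (k - 1) then 1 else 0) = int (card {k\<in>{3..<D}. i = 2 * (k - 1)})"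
    by (simp add: sum.inter_filter[symmetric])
  moreover have "{k\<in>{3..<D}. i = 2 * (k - 1)} \<subseteq> {i div 2 + 1}"
    by auto
  then have "card {k\<in>{3..<D}. i = 2 * (k - 1)} \<le> 1"
    using card_mono[of "{i div 2 + 1}"] by fastforce
  moreover have "card {k\<in>{3..<D}. i = 2 * (k - 1)} = 0" if "i = 2 * (D - 1)"
    using that by auto
  ultimately show ?thesis
    unfolding coeff_Q by auto
qed

lemma coeff_W: "coeff W j = (if 2 \<le> j then coeff Q (j + D) else 0)"
proof -
  have "2 \<le> j \<Longrightarrow> j - 2 + (D + 2) = j + D"
    by arith
  then show ?thesis
    unfolding W_def by (auto simp: coeff_monom_mult coeff_poly_shift)
qed

lemma coeff_W_eq_0: "j < 2 \<or> D - 2 < j \<Longrightarrow> coeff W j = 0"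
  using three_le_D by (auto simp: coeff_W intro: coeff_Q_eq_0)

lemma coeff_V: "coeff V j = (if j = 1 then 2 else 0) - coeff W j"
  unfolding V_def by (cases j) (auto simp: coeff_pCons split: nat.split)

lemma coeff_V_low: "coeff V 0 = 0" "coeff V 1 = 2"
  by (simp_all add: coeff_V coeff_W_eq_0)

lemma coeff_V_high:
  assumes "D - 1 \<le> j"
  shows "coeff V j = 0"
proof -
  have "D - 2 < j" "j \<noteq> 1"
    using assms three_le_D by auto
  then show ?thesis
    by (simp add: coeff_V coeff_W_eq_0)
qed

lemma W_as_sum: "W = (\<Sum>k\<in>{3..<D}. monom (coeff W (k - 1)) (k - 1))"
proof (rule poly_eqI)
  fix j
  show "coeff W j = coeff (\<Sum>k\<in>{3..<D}. monom (coeff W (k - 1)) (k - 1)) j"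
    using coeff_W_eq_0[of j] three_le_D by (subst coeff_sum_monom_pred) auto
qed

lemma poly_Q: "poly Q x = poly (poly_cutoff (D + 2) Q) x + x ^ (D + 2) * poly (poly_shift (D + 2) Q) x"
  using arg_cong[OF poly_cutoff_plus_shift[of "D + 2" Q], of "\<lambda>q. poly q x"]
  by (simp add: poly_monom)

lemma sum_squares_X:
  "(\<Sum>k<D. (poly (X k) x)\<^sup>2) = poly N x + (a\<^sup>2 + b\<^sup>2 + 1) * ((x ^ D - poly V x)\<^sup>2 + 4 * x ^ (2 * (D - 1)))"
proof -
  let ?u = "x ^ D" and ?w = "x ^ (D - 1)" and ?v = "poly V x"
  let ?sh = "poly (poly_shift (D + 2) Q) x" and ?cut = "poly (poly_cutoff (D + 2) Q) x"
  have split: "{..<D} = {0, 1, 2} \<union> {3..<D}"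
    using three_le_D by auto
  have "(\<Sum>k\<in>{3..<D}. (poly (X k) x)\<^sup>2) = 4 * (\<Sum>k\<in>{3..<D}. x ^ (2 * (k - 1)))"
    unfolding sum_distrib_left
    by (intro sum.cong) (auto simp: X_def poly_monom power_mult_distrib power_mult[symmetric] mult.commute)
  also have "\<dots> = 4 * (poly Q x + ?w\<^sup>2)"
    unfolding Q_def by (simp add: poly_sum poly_monom power_mult[symmetric] mult.commute)
  finally have high: "(\<Sum>k\<in>{3..<D}. (poly (X k) x)\<^sup>2) = 4 * (?cut + x ^ (D + 2) * ?sh + ?w\<^sup>2)"
    by (simp add: poly_Q)
  have powers: "?u * x = x ^ (D + 1)" "?u * x\<^sup>2 = x ^ (D + 2)" "?w\<^sup>2 = x ^ (2 * (D - 1))"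
    by (simp_all add: power_add power2_eq_square mult_2)
  have v: "?v = 2 * x - x\<^sup>2 * ?sh"
    by (simp add: V_def W_def poly_monom)
  have "(\<Sum>k<D. (poly (X k) x)\<^sup>2)
      = (?u + ?v)\<^sup>2 + (a * (?u - ?v) + 2 * b * ?w)\<^sup>2 + (b * (?u - ?v) - 2 * a * ?w)\<^sup>2
        + 4 * (?cut + x ^ (D + 2) * ?sh + ?w\<^sup>2)"
    unfolding split using three_le_D high by (simp add: sum.union_disjoint X_def poly_monom)
  also have "\<dots> = 8 * (?u * x) + 4 * ?cut + (a\<^sup>2 + b\<^sup>2 + 1) * ((?u - ?v)\<^sup>2 + 4 * ?w\<^sup>2)
      + 4 * (x ^ (D + 2) - ?u * x\<^sup>2) * ?sh"
    unfolding v by (simp add: algebra_simps power2_eq_square)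
  finally show ?thesis
    unfolding powers N_def by (simp add: poly_monom)
qed

lemma sum_smult_X:
  "(\<Sum>k<D. Polynomial.smult (c k) (X k)) =
     Polynomial.smult (c 0 + a * c 1 + b * c 2) (monom 1 D) + Polynomial.smult (c 0 - a * c 1 - b * c 2) V
     + monom (2 * (b * c 1 - a * c 2)) (D - 1) + (\<Sum>k\<in>{3..<D}. monom (2 * c k) (k - 1))"
proof -
  have split: "{..<D} = {0, 1, 2} \<union> {3..<D}"
    using three_le_D by auto
  have "poly (\<Sum>k<D. Polynomial.smult (c k) (X k)) x =
     poly (Polynomial.smult (c 0 + a * c 1 + b * c 2) (monom 1 D) + Polynomial.smult (c 0 - a * c 1 - b * c 2) V
     + monom (2 * (b * c 1 - a * c 2)) (D - 1) + (\<Sum>k\<in>{3..<D}. monom (2 * c k) (k - 1))) x" for x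
    unfolding split using three_le_D
    by (simp add: sum.union_disjoint poly_sum X_def poly_monom algebra_simps)
  then show ?thesis
    by (intro poly_eq_poly_eq_iff[THEN iffD1] ext)
qed

lemma coeff_sum_smult_X:
  "coeff (\<Sum>k<D. Polynomial.smult (c k) (X k)) j =
     (c 0 + a * c 1 + b * c 2) * (if j = D then 1 else 0) + (c 0 - a * c 1 - b * c 2) * coeff V j
     + 2 * (b * c 1 - a * c 2) * (if j = D - 1 then 1 else 0)
     + (if 2 \<le> j \<and> j + 1 < D then 2 * c (j + 1) else 0)"
  unfolding sum_smult_X using coeff_sum_monom_pred[of 3 "\<lambda>k. 2 * c k" D j] by simp

lemma coeff_sum_smult_X_at:
  "coeff (\<Sum>k<D. Polynomial.smult (c k) (X k)) 0 = 0"
  "coeff (\<Sum>k<D. Polynomial.smult (c k) (X k)) 1 = 2 * (c 0 - a * c 1 - b * c 2)"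
  "coeff (\<Sum>k<D. Polynomial.smult (c k) (X k)) (D - 1) = 2 * (b * c 1 - a * c 2)"
  "coeff (\<Sum>k<D. Polynomial.smult (c k) (X k)) D = c 0 + a * c 1 + b * c 2"
  "coeff (\<Sum>k<D. Polynomial.smult (c k) (X k)) (D + 1) = 0"
proof -
  have "D \<noteq> D - 1" "D - 1 \<noteq> 1" "D \<noteq> 1" "D + 1 \<noteq> D - 1" "D - 1 \<noteq> 0" "\<not> D + 2 < D"
    using three_le_D by auto
  then show
    "coeff (\<Sum>k<D. Polynomial.smult (c k) (X k)) 0 = 0"
    "coeff (\<Sum>k<D. Polynomial.smult (c k) (X k)) 1 = 2 * (c 0 - a * c 1 - b * c 2)"
    "coeff (\<Sum>k<D. Polynomial.smult (c k) (X k)) (D - 1) = 2 * (b * c 1 - a * c 2)"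
    "coeff (\<Sum>k<D. Polynomial.smult (c k) (X k)) D = c 0 + a * c 1 + b * c 2"
    "coeff (\<Sum>k<D. Polynomial.smult (c k) (X k)) (D + 1) = 0"
    using coeff_V_low coeff_V_high[of "D - 1"] coeff_V_high[of D] coeff_V_high[of "D + 1"]
    unfolding coeff_sum_smult_X by (simp_all add: mult.commute)
qed

lemma coeff_sum_smult_X_middle:
  assumes "3 \<le> k" and "k < D"
  shows "coeff (\<Sum>k<D. Polynomial.smult (c k) (X k)) (k - 1) = (c 0 - a * c 1 - b * c 2) * coeff V (k - 1) + 2 * c k"
proof -
  have "k - 1 \<noteq> D" "k - 1 \<noteq> D - 1" "2 \<le> k - 1" "k - 1 + 1 = k"
    using assms by auto
  then show ?thesis
    using assms unfolding coeff_sum_smult_X by simp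
qed

lemma coeff_N_top: "coeff N (D + 1) = 4 * (2 + coeff Q (D + 1))"
  unfolding N_def by (simp add: coeff_poly_cutoff)

lemma coeff_N_eq_0: "D + 1 < j \<Longrightarrow> coeff N j = 0"
  unfolding N_def by (simp add: coeff_poly_cutoff)

end

locale sphere_curve_mod = sphere_curve +
  fixes p :: int
  assumes prime_p: "prime p" and five_le_p: "5 \<le> p" and p_dvd: "p dvd a\<^sup>2 + b\<^sup>2 + 1"
begin

lemma dvd_cancel_small:
  assumes "p dvd m * x" and "0 < m" and "m < p"
  shows "p dvd x"
proof -
  have "\<not> p dvd m"
    using assms(2,3) zdvd_not_zless by blast
  then show ?thesis
    using assms(1) prime_p prime_dvd_mult_iff by blast
qed

lemma sum_squares_X_cong: "[\<Sum>k<D. (poly (X k) x)\<^sup>2 = poly N x] (mod p)"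
  unfolding sum_squares_X cong_iff_dvd_diff using p_dvd by simp

lemma dvd_if_dvd_isotropic_combinations:
  assumes "p dvd c0 + a * c1 + b * c2" and "p dvd c0 - a * c1 - b * c2" and "p dvd b * c1 - a * c2"
  shows "p dvd c0" and "p dvd c1" and "p dvd c2"
proof -
  have "p dvd 2 * c0"
    using dvd_add[OF assms(1,2)] by (simp add: algebra_simps)
  then show "p dvd c0"
    by (rule dvd_cancel_small) (use five_le_p in auto)
  then have "p dvd a * c1 + b * c2"
    using assms(1) by (simp add: dvd_add_right_iff add.assoc)
  have K_mult: "p dvd (a\<^sup>2 + b\<^sup>2 + 1) * x" for x
    using p_dvd by (rule dvd_mult2)
  have "c1 = (a\<^sup>2 + b\<^sup>2 + 1) * c1 - a * (a * c1 + b * c2) - b * (b * c1 - a * c2)"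
    and "c2 = (a\<^sup>2 + b\<^sup>2 + 1) * c2 - b * (a * c1 + b * c2) + a * (b * c1 - a * c2)"
    by (simp_all add: algebra_simps power2_eq_square)
  moreover note combination_dvd = K_mult dvd_mult[OF \<open>p dvd a * c1 + b * c2\<close>] dvd_mult[OF assms(3)]
  ultimately show "p dvd c1" "p dvd c2"
    by (metis dvd_diff combination_dvd, metis dvd_add dvd_diff combination_dvd)
qed

lemma dvd_if_dvd_top_coeff:
  assumes "p dvd coeff ([:e:] + (\<Sum>k<D. Polynomial.smult (c k) (X k)) + Polynomial.smult f N) (D + 1)"
  shows "p dvd f"
proof -
  have "coeff ([:e:] + (\<Sum>k<D. Polynomial.smult (c k) (X k)) + Polynomial.smult f N) (D + 1)
      = 4 * ((2 + coeff Q (D + 1)) * f)"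
    unfolding coeff_add coeff_smult coeff_N_top coeff_sum_smult_X_at by (simp add: algebra_simps)
  then have "p dvd 4 * ((2 + coeff Q (D + 1)) * f)"
    using assms by simp
  then have "p dvd (2 + coeff Q (D + 1)) * f"
    by (rule dvd_cancel_small) (use five_le_p in auto)
  then show "p dvd f"
    by (rule dvd_cancel_small) (use abs_coeff_Q_le_1[of "D + 1"] five_le_p in auto)
qed

lemma coeffs_dvd_imp_dvd:
  assumes "\<forall>j. p dvd coeff ([:e:] + (\<Sum>k<D. Polynomial.smult (c k) (X k)) + Polynomial.smult f N) j"
  shows "p dvd e" and "p dvd f" and "\<forall>k<D. p dvd c k"
proof -
  let ?S = "\<Sum>k<D. Polynomial.smult (c k) (X k)"
  show "p dvd f"
    using assms dvd_if_dvd_top_coeff by blast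
  moreover have "coeff [:e:] j = 0" if "j \<noteq> 0" for j
    using that by (cases j) auto
  ultimately have S_dvd: "p dvd coeff ?S j" if "j \<noteq> 0" for j
    using assms[rule_format, of j] that by (simp add: dvd_add_left_iff)
  show "p dvd e"
    using assms[rule_format, of 0, unfolded coeff_add coeff_smult coeff_sum_smult_X_at] \<open>p dvd f\<close>
    by (simp add: dvd_add_left_iff)
  have "p dvd c 0 + a * c 1 + b * c 2"
    using S_dvd[of D, unfolded coeff_sum_smult_X_at] three_le_D by simp
  moreover have "p dvd 2 * (c 0 - a * c 1 - b * c 2)"
    using S_dvd[of 1, unfolded coeff_sum_smult_X_at] by simp
  then have "p dvd c 0 - a * c 1 - b * c 2"
    by (rule dvd_cancel_small) (use five_le_p in auto)
  moreover have "p dvd 2 * (b * c 1 - a * c 2)"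
    using S_dvd[of "D - 1", unfolded coeff_sum_smult_X_at] three_le_D by simp
  then have "p dvd b * c 1 - a * c 2"
    by (rule dvd_cancel_small) (use five_le_p in auto)
  ultimately have low: "p dvd c 0" "p dvd c 1" "p dvd c 2"
    by (rule dvd_if_dvd_isotropic_combinations)+
  have high: "p dvd c k" if "3 \<le> k" "k < D" for k
  proof -
    have "p dvd (c 0 - a * c 1 - b * c 2) * coeff V (k - 1) + 2 * c k"
      using S_dvd[of "k - 1"] that coeff_sum_smult_X_middle[OF that] by simp
    then have "p dvd 2 * c k"
      using low by (simp add: dvd_add_right_iff)
    then show ?thesis
      by (rule dvd_cancel_small) (use five_le_p in auto)
  qed
  show "\<forall>k<D. p dvd c k"
  proof (intro allI impI)
    fix k assume "k < D"
    then consider "k = 0" | "k = 1" | "k = 2" | "3 \<le> k"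
      by linarith
    then show "p dvd c k"
      by cases (use low high \<open>k < D\<close> in auto)
  qed
qed

lemma quadric_relation_mod_imp_dvd:
  assumes "T \<subseteq> {0..<p}" and "card T = D + 2"
    and "\<forall>t\<in>T. [e + (\<Sum>k<D. c k * poly (X k) t) + f * (\<Sum>k<D. (poly (X k) t)\<^sup>2) = 0] (mod p)"
  shows "p dvd e \<and> p dvd f \<and> (\<forall>k<D. p dvd c k)"
proof -
  define G where "G = [:e:] + (\<Sum>k<D. Polynomial.smult (c k) (X k)) + Polynomial.smult f N"
  have "coeff G j = 0" if "D + 1 < j" for j
  proof -
    have "coeff V j = 0"
      using that by (intro coeff_V_high) simp
    then show ?thesis
      using that coeff_N_eq_0[OF that] unfolding G_def coeff_add coeff_smult coeff_sum_smult_X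
      by (cases j) auto
  qed
  then have "degree G < card T"
    using assms(2) by (simp add: degree_le le_imp_less_Suc)
  moreover have "p dvd poly G t" if "t \<in> T" for t
  proof -
    have "[poly G t = e + (\<Sum>k<D. c k * poly (X k) t) + f * (\<Sum>k<D. (poly (X k) t)\<^sup>2)] (mod p)"
      unfolding G_def using sum_squares_X_cong[of t]
      by (simp add: poly_sum cong_add cong_scalar_left cong_sym)
    then show ?thesis
      using assms(3) that cong_trans cong_0_iff by blast
  qed
  ultimately have "\<forall>j. p dvd coeff G j"
    using prime_dvd_coeffs_if_many_roots[OF prime_p assms(1)] by blast
  then show ?thesis
    unfolding G_def using coeffs_dvd_imp_dvd by blast
qed

lemma four_times_parameter_cong:
  obtains w where "\<And>x. [(\<Sum>k<D. w k * poly (X k) x) = 4 * x] (mod p)"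
proof
  define w where "w k = (if k = 0 then 1 else if k = 1 then a else if k = 2 then b else coeff W (k - 1))" for k
  fix x
  have "poly (\<Sum>k\<in>{3..<D}. monom (2 * w k) (k - 1)) x = 2 * poly W x"
    by (subst W_as_sum) (auto simp: poly_sum poly_monom w_def sum_distrib_left intro!: sum.cong)
  then have "(\<Sum>k<D. w k * poly (X k) x)
      = (a\<^sup>2 + b\<^sup>2 + 1) * (x ^ D - 2 * x + poly W x) + 4 * x"
    using arg_cong[OF sum_smult_X[of w], of "\<lambda>q. poly q x"]
    by (simp add: poly_sum w_def V_def poly_monom algebra_simps power2_eq_square)
  then show "[(\<Sum>k<D. w k * poly (X k) x) = 4 * x] (mod p)"
    using p_dvd by (simp add: cong_iff_dvd_diff)
qed

lemma X_inj_mod: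
  assumes "s \<in> {0..<p}" and "t \<in> {0..<p}" and "\<forall>k<D. [poly (X k) s = poly (X k) t] (mod p)"
  shows "s = t"
proof -
  obtain w where w: "\<And>x. [(\<Sum>k<D. w k * poly (X k) x) = 4 * x] (mod p)"
    using four_times_parameter_cong by blast
  have "[(\<Sum>k<D. w k * poly (X k) s) = (\<Sum>k<D. w k * poly (X k) t)] (mod p)"
    using assms(3) by (intro cong_sum cong_scalar_left) auto
  then have "[4 * s = 4 * t] (mod p)"
    using w cong_sym cong_trans by metis
  then have "p dvd 4 * (s - t)"
    by (simp add: cong_iff_dvd_diff algebra_simps)
  then have "p dvd s - t"
    by (rule dvd_cancel_small) (use five_le_p in auto)
  then show ?thesis
    using assms(1,2) by (rule eq_if_dvd_diff[rotated -1])
qed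

definition y :: "nat \<Rightarrow> int \<Rightarrow> int" where
  "y k t = (poly (X k) t - 1) mod p + 1"

lemma y_cong: "[y k t = poly (X k) t] (mod p)"
  unfolding cong_def y_def by (simp add: mod_add_left_eq)

lemma y_bounds: "1 \<le> y k t \<and> y k t \<le> p"
proof -
  have "0 \<le> (poly (X k) t - 1) mod p" "(poly (X k) t - 1) mod p < p"
    using five_le_p by simp_all
  then show ?thesis
    unfolding y_def by linarith
qed

lemma no_quadric_through_curve:
  fixes w :: "nat \<Rightarrow> real"
  assumes "T \<subseteq> {0..<p}" and "card T = D + 2" and "\<exists>j<D + 2. w j \<noteq> 0"
    and "\<forall>t\<in>T. w 0 + (\<Sum>k<D. w (k + 1) * y k t) + w (D + 1) * (\<Sum>k<D. (y k t)\<^sup>2) = 0"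
  shows False
proof -
  have "finite T"
    using assms(1) finite_subset by blast
  moreover have "\<not> is_unit p"
    using prime_p not_prime_unit by blast
  ultimately obtain c where c: "(\<exists>j<D + 2. \<not> p dvd c j) \<and>
      (\<forall>t\<in>T. c 0 + (\<Sum>k<D. c (k + 1) * y k t) + c (D + 1) * (\<Sum>k<D. (y k t)\<^sup>2) = 0)"
    using exists_integer_quadric_relation_not_all_dvd[OF _ assms(2) _ assms(3,4)] by blast
  have "[c 0 + (\<Sum>k<D. c (k + 1) * poly (X k) t) + c (D + 1) * (\<Sum>k<D. (poly (X k) t)\<^sup>2) = 0] (mod p)"
    if "t \<in> T" for t
  proof -
    have "[c 0 + (\<Sum>k<D. c (k + 1) * y k t) + c (D + 1) * (\<Sum>k<D. (y k t)\<^sup>2)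
        = c 0 + (\<Sum>k<D. c (k + 1) * poly (X k) t) + c (D + 1) * (\<Sum>k<D. (poly (X k) t)\<^sup>2)] (mod p)"
      by (intro cong_add cong_mult cong_refl cong_sum cong_pow y_cong)
    then show ?thesis
      using c that by (simp add: cong_sym_eq)
  qed
  then have dvd: "p dvd c 0" "p dvd c (D + 1)" "\<forall>k<D. p dvd c (k + 1)"
    using quadric_relation_mod_imp_dvd[OF assms(1,2), of "c 0" "\<lambda>k. c (k + 1)" "c (D + 1)"] by blast+
  have "p dvd c j" if "j < D + 2" for j
  proof (cases "j = 0 \<or> j = D + 1")
    case True
    then show ?thesis
      using dvd by auto
  next
    case False
    then have "j - 1 < D" "j - 1 + 1 = j"
      using that by auto
    then show ?thesis
      using dvd(3) by metis
  qed
  then show False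
    using c by blast
qed

definition curve_point :: "(nat \<Rightarrow> 'd::finite) \<Rightarrow> int \<Rightarrow> real ^ 'd" where
  "curve_point \<iota> t = (\<chi> i. of_int (y (inv_into {..<D} \<iota> i) t))"

lemma curve_point_nth:
  assumes "bij_betw \<iota> {..<D} UNIV" and "k < D"
  shows "curve_point \<iota> t $ \<iota> k = of_int (y k t)"
  using assms by (simp add: curve_point_def bij_betw_inv_into_left)

lemma curve_point_in_lattice_cube: "curve_point \<iota> t \<in> lattice_cube (nat p)"
proof -
  have "of_int (y k t) \<in> real ` {1..nat p}" for k
    using y_bounds[of k t] by (intro image_eqI[of _ _ "nat (y k t)"]) auto
  then show ?thesis
    unfolding lattice_cube_def curve_point_def by simp
qed

lemma inj_on_curve_point:
  assumes "bij_betw \<iota> {..<D} UNIV"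
  shows "inj_on (curve_point \<iota>) {0..<p}"
proof (rule inj_onI)
  fix s t assume "s \<in> {0..<p}" "t \<in> {0..<p}" and eq: "curve_point \<iota> s = curve_point \<iota> t"
  have "[poly (X k) s = poly (X k) t] (mod p)" if "k < D" for k
  proof -
    have "y k s = y k t"
      using arg_cong[OF eq, of "\<lambda>z. z $ \<iota> k"] curve_point_nth[OF assms that] by simp
    then show ?thesis
      using y_cong[of k s] y_cong[of k t] by (metis cong_sym cong_trans)
  qed
  then show "s = t"
    using X_inj_mod \<open>s \<in> {0..<p}\<close> \<open>t \<in> {0..<p}\<close> by blast
qed

lemma curve_points_not_on_sphere_or_hyperplane:
  fixes \<iota> :: "nat \<Rightarrow> 'd::finite"
  assumes \<iota>: "bij_betw \<iota> {..<D} UNIV"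
    and "S \<subseteq> curve_point \<iota> ` {0..<p}" and "card S = D + 2"
    and "is_sphere T \<or> is_hyperplane T" and "S \<subseteq> T"
  shows False
proof -
  obtain w where w: "(\<exists>j<D + 2. w j \<noteq> 0) \<and>
      (\<forall>z\<in>T. w 0 + (\<Sum>k<D. w (k + 1) * z $ \<iota> k) + w (D + 1) * (\<Sum>k<D. (z $ \<iota> k)\<^sup>2) = 0)"
    using sphere_or_hyperplane_coordinate_relation[OF \<iota> assms(4)] ..
  define P where "P = {t\<in>{0..<p}. curve_point \<iota> t \<in> S}"
  have "curve_point \<iota> ` P = S"
    using assms(2) unfolding P_def by blast
  moreover have "inj_on (curve_point \<iota>) P"
    by (rule inj_on_subset[OF inj_on_curve_point[OF \<iota>]]) (auto simp: P_def)
  ultimately have "card P = D + 2"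
    using card_image assms(3) by metis
  moreover have "w 0 + (\<Sum>k<D. w (k + 1) * y k t) + w (D + 1) * (\<Sum>k<D. (y k t)\<^sup>2) = 0"
    if "t \<in> P" for t
  proof -
    have "curve_point \<iota> t \<in> T"
      using that assms(5) unfolding P_def by blast
    then have "w 0 + (\<Sum>k<D. w (k + 1) * curve_point \<iota> t $ \<iota> k)
        + w (D + 1) * (\<Sum>k<D. (curve_point \<iota> t $ \<iota> k)\<^sup>2) = 0"
      using w by blast
    moreover have "(\<Sum>k<D. w (k + 1) * curve_point \<iota> t $ \<iota> k) = (\<Sum>k<D. w (k + 1) * real_of_int (y k t))"
      and "(\<Sum>k<D. (curve_point \<iota> t $ \<iota> k)\<^sup>2) = (\<Sum>k<D. (real_of_int (y k t))\<^sup>2)"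
      using curve_point_nth[OF \<iota>] by (auto intro!: sum.cong)
    ultimately show ?thesis
      by simp
  qed
  ultimately show False
    using no_quadric_through_curve[of P w] w unfolding P_def by blast
qed

end

section \<open>Large subsets of the lattice cube in general position\<close>

lemma exists_lattice_cube_subset_no_sphere_no_hyperplane:
  assumes "CARD('d::finite) \<ge> 3" and "prime p" and "p \<ge> 5"
  shows "\<exists>A :: (real ^ 'd) set. A \<subseteq> lattice_cube p \<and> card A = p \<and>
    no_k_on_common (CARD('d) + 2) is_sphere A \<and> no_k_on_common (CARD('d) + 2) is_hyperplane A"
proof -
  have "prime (int p)"
    using assms(2) by simp
  then obtain a b where "int p dvd a\<^sup>2 + b\<^sup>2 + 1"
    using prime_dvd_sum_two_squares_plus_one by blast
  then interpret sphere_curve_mod "CARD('d)" a b "int p"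
    using assms \<open>prime (int p)\<close> by unfold_locales auto
  have "\<exists>\<iota> :: nat \<Rightarrow> 'd. bij_betw \<iota> {..<CARD('d)} UNIV"
    using ex_bij_betw_nat_finite[of "UNIV :: 'd set"] by (simp add: atLeast0LessThan)
  then obtain \<iota> :: "nat \<Rightarrow> 'd" where \<iota>: "bij_betw \<iota> {..<CARD('d)} UNIV" ..
  let ?A = "curve_point \<iota> ` {0..<int p}"
  have "?A \<subseteq> lattice_cube p"
    using curve_point_in_lattice_cube by auto
  moreover have "card ?A = p"
    using card_image[OF inj_on_curve_point[OF \<iota>]] by simp
  moreover have "no_k_on_common (CARD('d) + 2) P ?A" if "P = is_sphere \<or> P = is_hyperplane" for P
    unfolding no_k_on_common_def
  proof (intro allI impI notI)
    fix S assume S: "S \<subseteq> ?A \<and> card S = CARD('d) + 2" and "\<exists>T. P T \<and> S \<subseteq> T"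
    then obtain T where "P T" "S \<subseteq> T" by blast
    then show False
      using curve_points_not_on_sphere_or_hyperplane[OF \<iota>, of S T] S that by blast
  qed
  ultimately show ?thesis
    by blast
qed

lemma lattice_cube_mono:
  assumes "m \<le> n"
  shows "lattice_cube m \<subseteq> lattice_cube n"
proof -
  have "real ` {1..m} \<subseteq> real ` {1..n}"
    using assms by (intro image_mono) auto
  then show ?thesis
    unfolding lattice_cube_def by (intro Collect_mono) (meson subsetD)
qed

lemma no_k_on_common_if_card_less:
  assumes "finite A" and "card A < k"
  shows "no_k_on_common k P A"
  unfolding no_k_on_common_def
proof (intro allI impI notI)
  fix S assume S: "S \<subseteq> A \<and> card S = k"
  then have "card S \<le> card A"
    using card_mono[OF assms(1)] by blast
  then show False
    using S assms(2) by linarith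
qed

lemma eventually_large_subset_no_sphere_no_hyperplane:
  assumes "CARD('d::finite) \<ge> 3"
  shows "\<forall>\<^sub>F n in sequentially. \<exists>A :: (real ^ 'd) set. A \<subseteq> lattice_cube n \<and>
    real n powr (3 / (real CARD('d) + 1)) \<le> real (card A) \<and>
    no_k_on_common (CARD('d) + 2) is_sphere A \<and> no_k_on_common (CARD('d) + 2) is_hyperplane A"
proof -
  define c where "c = 3 / (real CARD('d) + 1)"
  have "0 < c" "c < 1"
    using assms unfolding c_def by (auto simp: field_simps)
  then have "\<forall>\<^sub>F n in sequentially. 5 \<le> real n powr c"
    by real_asymp
  with eventually_exists_prime_between_powr[OF \<open>0 < c\<close> \<open>c < 1\<close>]
  show ?thesis
    unfolding c_def[symmetric]
  proof eventually_elim
    case (elim n)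
    then obtain p where p: "prime p" "real n powr c \<le> p" "p \<le> n"
      by blast
    then have "p \<ge> 5"
      using elim by linarith
    then obtain A :: "(real ^ 'd) set" where A: "A \<subseteq> lattice_cube p" "card A = p"
      "no_k_on_common (CARD('d) + 2) is_sphere A" "no_k_on_common (CARD('d) + 2) is_hyperplane A"
      using exists_lattice_cube_subset_no_sphere_no_hyperplane[OF assms p(1)] by blast
    then show ?case
      using lattice_cube_mono[OF p(3)] p(2) by (intro exI[of _ A]) auto
  qed
qed

theorem theorem1p1:
  assumes "CARD('d::finite) \<ge> 3"
  shows "\<exists>\<epsilon> :: nat \<Rightarrow> real. \<epsilon> \<longlonglongrightarrow> 0 \<and>
     (\<forall>n::nat. n \<ge> 1 \<longrightarrow>
        (\<exists>A :: (real ^ 'd) set. A \<subseteq> lattice_cube n \<and>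
           real (card A) \<ge> real n powr (3 / (real CARD('d) + 1) - \<epsilon> n) \<and>
           no_k_on_common (CARD('d) + 2) is_sphere A \<and>
           no_k_on_common (CARD('d) + 2) is_hyperplane A))"
proof -
  obtain N where N: "\<And>n. n \<ge> N \<Longrightarrow> \<exists>A :: (real ^ 'd) set. A \<subseteq> lattice_cube n \<and>
      real n powr (3 / (real CARD('d) + 1)) \<le> real (card A) \<and>
      no_k_on_common (CARD('d) + 2) is_sphere A \<and> no_k_on_common (CARD('d) + 2) is_hyperplane A"
    using eventually_large_subset_no_sphere_no_hyperplane[OF assms] unfolding eventually_sequentially by blast
  define \<epsilon> where "\<epsilon> n = (if n < N then 3 / (real CARD('d) + 1) else 0)" for n
  have "\<forall>\<^sub>F n in sequentially. \<epsilon> n = 0"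
    using eventually_ge_at_top[of N] by eventually_elim (simp add: \<epsilon>_def)
  then have "\<epsilon> \<longlonglongrightarrow> 0"
    by (rule tendsto_eventually)
  moreover have "\<exists>A :: (real ^ 'd) set. A \<subseteq> lattice_cube n \<and>
      real (card A) \<ge> real n powr (3 / (real CARD('d) + 1) - \<epsilon> n) \<and>
      no_k_on_common (CARD('d) + 2) is_sphere A \<and> no_k_on_common (CARD('d) + 2) is_hyperplane A"
    if "n \<ge> 1" for n
  proof (cases "n < N")
    case True
    have "(\<chi> i. 1) \<in> lattice_cube n"
      using that by (auto simp: lattice_cube_def intro: image_eqI[of _ _ 1])
    then show ?thesis
      using True that by (intro exI[of _ "{\<chi> i. 1}"]) (simp add: \<epsilon>_def no_k_on_common_if_card_less)
  next
    case False
    then show ?thesis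
      using N[of n] by (simp add: \<epsilon>_def)
  qed
  ultimately show ?thesis
    by blast
qed

end
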